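(* Let $A$ be an $n\times n$ real symmetric positive semidefinite matrix. If $n\ge4$, then for any $S\subseteq[n]\setminus\{1,2,3,4\}$ and any $r\in\mathbb{R}$, \[ (r+1)\,A_{S\cup\{1,4\}}A_{S\cup\{2,3\}}+r(r+1)\,A_{S\cup\{1,3\}}A_{S\cup\{2,4\}}\;\ge\; r\,A_{S\cup\{1,2\}}A_{S\cup\{3,4\}}. \] If $n\ge3$, then for any $S\subseteq[n]\setminus\{1,2,3\}$ and any $r\in\mathbb{R}$, \[ (r+1)\,A_{S\cup\{1\}}A_{S\cup\{2,3\}}+r(r+1)\,A_{S\cup\{2\}}A_{S\cup\{1,3\}}\;\ge\; r\,A_{S\cup\{3\}}A_{S\cup\{1,2\}}. \] Moreover these inequalities are tight for every $r\in\mathbb{R}$, in the sense that the infimum of the left-hand side minus the right-hand side over all $n\times n$ real symmetric positive semidefinite matrices is $0$.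
   Context: $A_S$ denotes the principal minor of $A$ with rows and columns indexed by $S$ ($A_\emptyset=1$). *)

theory Defs
  imports Complex_Main "HOL-Combinatorics.Permutations"
begin

text \<open>An n x n real matrix is represented as a function nat => nat => real whose
entries at indices in {1..n} are relevant (indices [n] = {1..n} as in the paper).\<close>

definition sym_psd :: "nat \<Rightarrow> (nat \<Rightarrow> nat \<Rightarrow> real) \<Rightarrow> bool" where
  "sym_psd n A \<longleftrightarrow>
     (\<forall>i\<in>{1..n}. \<forall>j\<in>{1..n}. A i j = A j i) \<and>
     (\<forall>x :: nat \<Rightarrow> real. 0 \<le> (\<Sum>i\<in>{1..n}. \<Sum>j\<in>{1..n}. x i * A i j * x j))"

text \<open>Principal minor A_S: the determinant (Leibniz formula) of the submatrix with
rows and columns indexed by S; A_{} = 1.\<close>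

definition pminor :: "(nat \<Rightarrow> nat \<Rightarrow> real) \<Rightarrow> nat set \<Rightarrow> real" where
  "pminor A S = (\<Sum>p | p permutes S. of_int (sign p) * (\<Prod>i\<in>S. A i (p i)))"

end

theory Submission
  imports Defs
begin

text \<open>Taking the Schur complement of a positive semidefinite \<open>A\<close> with respect to \<open>s \<in> S\<close> keeps it
positive semidefinite and turns each principal minor \<open>A\<^bsub>S\<union>T\<^esub>\<close> into \<open>A\<^bsub>S\<union>T\<^esub> / A\<^sub>s\<^sub>s\<close> indexed by
\<open>S - {s} \<union> T\<close>; as both sides of the inequalities are quadratic in these minors, it suffices to
take \<open>S = {}\<close>.
Writing \<open>a, b, c\<close> for the products of minors with coefficients \<open>r + 1\<close>, \<open>r (r + 1)\<close> and \<open>r\<close>, the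
difference of the two sides is \<open>b r\<^sup>2 + (a + b - c) r + a\<close>; as \<open>a, b \<ge> 0\<close>, it is nonnegative for
every \<open>r\<close> exactly when \<open>\<surd>a, \<surd>b, \<surd>c\<close> satisfy the triangle inequality. By the Schur product theorem the matrix \<open>K\<^sub>i\<^sub>j = A\<^sub>i\<^sub>j\<^sup>2 / (A\<^sub>i\<^sub>i A\<^sub>j\<^sub>j)\<close> is positive
semidefinite, hence the Gram matrix of points \<open>x\<^sub>i\<close>, and \<open>2 A\<^bsub>{i,j}\<^esub> = A\<^sub>i\<^sub>i A\<^sub>j\<^sub>j |x\<^sub>i - x\<^sub>j|\<^sup>2\<close>.
In these terms the three-index inequality is the triangle inequality for \<open>x\<^sub>1, x\<^sub>2, x\<^sub>3\<close> and the
four-index one is Ptolemy's inequality for \<open>x\<^sub>1, \<dots>, x\<^sub>4\<close>. Both hold with equality for the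
zero matrix, which gives the infima.\<close>

section \<open>Positive semidefinite matrices on an index set\<close>

definition quad_form :: "nat set \<Rightarrow> (nat \<Rightarrow> nat \<Rightarrow> real) \<Rightarrow> (nat \<Rightarrow> real) \<Rightarrow> real" where
  "quad_form I A x = (\<Sum>i\<in>I. \<Sum>j\<in>I. x i * A i j * x j)"

definition psd_on :: "nat set \<Rightarrow> (nat \<Rightarrow> nat \<Rightarrow> real) \<Rightarrow> bool" where
  "psd_on I A \<longleftrightarrow> (\<forall>i\<in>I. \<forall>j\<in>I. A i j = A j i) \<and> (\<forall>x. 0 \<le> quad_form I A x)"

lemma sym_psd_eq_psd_on: "sym_psd n A = psd_on {1..n} A"
  unfolding sym_psd_def psd_on_def quad_form_def by simp

lemma psd_onD:
  assumes "psd_on I A"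
  shows psd_on_sym: "\<And>i j. i \<in> I \<Longrightarrow> j \<in> I \<Longrightarrow> A i j = A j i"
    and psd_on_quad_form_nonneg: "\<And>x. 0 \<le> quad_form I A x"
  using assms unfolding psd_on_def by blast+

lemma psd_onI:
  assumes "\<And>i j. i \<in> I \<Longrightarrow> j \<in> I \<Longrightarrow> A i j = A j i" "\<And>x. 0 \<le> quad_form I A x"
  shows "psd_on I A"
  using assms unfolding psd_on_def by blast

lemma quad_form_zero_outside:
  assumes "finite I" "J \<subseteq> I" "\<And>i. i \<in> I - J \<Longrightarrow> x i = 0"
  shows "quad_form I A x = quad_form J A x"
proof -
  have "(\<Sum>j\<in>I. x i * A i j * x j) = (\<Sum>j\<in>J. x i * A i j * x j)" for i
    using assms by (intro sum.mono_neutral_right) auto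
  then show ?thesis
    unfolding quad_form_def using assms by (simp add: sum.mono_neutral_right)
qed

lemma psd_on_subset:
  assumes "psd_on I A" "finite I" "J \<subseteq> I"
  shows "psd_on J A"
proof (rule psd_onI)
  show "A i j = A j i" if "i \<in> J" "j \<in> J" for i j
    using psd_on_sym[OF assms(1)] that assms(3) by blast
  show "0 \<le> quad_form J A x" for x
  proof -
    have "quad_form J A x = quad_form I A (\<lambda>i. if i \<in> J then x i else 0)"
      using quad_form_zero_outside[OF assms(2,3), of "\<lambda>i. if i \<in> J then x i else 0" A]
      by (simp add: quad_form_def)
    then show ?thesis using psd_on_quad_form_nonneg[OF assms(1)] by simp
  qed
qed

lemma quad_form_add_unit:
  assumes "finite I" "k \<in> I" "\<And>j. j \<in> I \<Longrightarrow> A j k = A k j"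
  shows "quad_form I A (\<lambda>i. x i + (if i = k then t else 0))
    = quad_form I A x + 2 * t * (\<Sum>j\<in>I. A k j * x j) + t\<^sup>2 * A k k"
proof -
  define y where "y i = (if i = k then t else 0)" for i
  have delta: "(\<Sum>i\<in>I. y i * f i) = t * f k" for f :: "nat \<Rightarrow> real"
  proof -
    have "y i * f i = (if i = k then t * f k else 0)" for i by (simp add: y_def)
    then show ?thesis using assms(1,2) by simp
  qed
  have "(x i + y i) * A i j * (x j + y j) = x i * A i j * x j + y i * (A i j * x j)
      + x i * (y j * A i j) + y i * (y j * A i j)" for i j
    by (simp add: algebra_simps)
  then have "quad_form I A (\<lambda>i. x i + y i) = quad_form I A x + (\<Sum>i\<in>I. y i * (\<Sum>j\<in>I. A i j * x j))
      + (\<Sum>i\<in>I. x i * (\<Sum>j\<in>I. y j * A i j)) + (\<Sum>i\<in>I. y i * (\<Sum>j\<in>I. y j * A i j))"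
    by (simp add: quad_form_def sum.distrib sum_distrib_left)
  moreover have "(\<Sum>i\<in>I. y i * (\<Sum>j\<in>I. A i j * x j)) = t * (\<Sum>j\<in>I. A k j * x j)"
    by (rule delta)
  moreover have "(\<Sum>i\<in>I. x i * (\<Sum>j\<in>I. y j * A i j)) = t * (\<Sum>j\<in>I. A k j * x j)"
    using assms(3) by (simp add: delta sum_distrib_left mult_ac)
  moreover have "(\<Sum>i\<in>I. y i * (\<Sum>j\<in>I. y j * A i j)) = t\<^sup>2 * A k k"
    by (simp add: delta power2_eq_square)
  ultimately show ?thesis by (simp add: y_def)
qed

lemma quad_form_unit:
  assumes "finite I" "k \<in> I"
  shows "quad_form I A (\<lambda>i. if i = k then t else 0) = t\<^sup>2 * A k k"
  using quad_form_zero_outside[of I "{k}" "\<lambda>i. if i = k then t else 0" A] assms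
  by (simp add: quad_form_def power2_eq_square)

lemma nonneg_quadratic_discriminant:
  fixes p q r :: real
  assumes "0 \<le> p" and nonneg: "\<And>t. 0 \<le> t\<^sup>2 * p + 2 * t * q + r"
  shows "q\<^sup>2 \<le> p * r"
proof (cases "p = 0")
  case True
  have "q = 0"
  proof (rule ccontr)
    assume "q \<noteq> 0"
    then have "(-(r + 1) / (2 * q))\<^sup>2 * p + 2 * (-(r + 1) / (2 * q)) * q + r = -1"
      using True by (simp add: field_simps)
    then show False using nonneg[of "-(r + 1) / (2 * q)"] by simp
  qed
  then show ?thesis using True by simp
next
  case False
  then have "(-q / p)\<^sup>2 * p + 2 * (-q / p) * q + r = (p * r - q\<^sup>2) / p"
    by (simp add: field_simps power2_eq_square)
  then show ?thesis using nonneg[of "-q / p"] \<open>0 \<le> p\<close> False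
    by (simp add: zero_le_divide_iff)
qed

lemma psd_on_diag_nonneg: "psd_on I A \<Longrightarrow> finite I \<Longrightarrow> i \<in> I \<Longrightarrow> 0 \<le> A i i"
  using psd_on_quad_form_nonneg[of I A "\<lambda>k. if k = i then 1 else 0"] quad_form_unit[of I i A 1] by simp

lemma psd_on_cauchy_schwarz:
  assumes A: "psd_on I A" "finite I" and "i \<in> I" "j \<in> I"
  shows "(A i j)\<^sup>2 \<le> A i i * A j j"
proof (rule nonneg_quadratic_discriminant)
  show "0 \<le> A i i" using psd_on_diag_nonneg assms by blast
  show "0 \<le> t\<^sup>2 * A i i + 2 * t * A i j + A j j" for t
  proof -
    have "(\<Sum>l\<in>I. A j l * (if l = i then t else 0)) = A i j * t"
      using assms psd_on_sym[OF A(1)] by (simp add: if_distrib[of "(*) _"] cong: if_cong)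
    moreover have "0 \<le> quad_form I A (\<lambda>k. (if k = i then t else 0) + (if k = j then 1 else 0))"
      using psd_on_quad_form_nonneg[OF A(1)] by blast
    ultimately have "0 \<le> t\<^sup>2 * A i i + 2 * (A i j * t) + A j j"
      using assms psd_on_sym[OF A(1)] by (simp add: quad_form_add_unit quad_form_unit)
    then show ?thesis by (simp add: algebra_simps)
  qed
qed

lemma psd_on_zero_diag_row:
  assumes "psd_on I A" "finite I" "i \<in> I" "j \<in> I" "A i i = 0"
  shows "A i j = 0"
  using psd_on_cauchy_schwarz[OF assms(1-4)] assms(5) by simp

text \<open>For \<open>A s s = 0\<close> the convention \<open>x / 0 = 0\<close> gives \<open>schur_compl A s = A\<close>; as row \<open>s\<close> of a
  positive semidefinite \<open>A\<close> then vanishes, the lemmas below hold without assuming \<open>A s s \<noteq> 0\<close>.\<close>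

definition schur_compl :: "(nat \<Rightarrow> nat \<Rightarrow> real) \<Rightarrow> nat \<Rightarrow> nat \<Rightarrow> nat \<Rightarrow> real" where
  "schur_compl A s i j = A i j - A i s * A s j / A s s"

lemma schur_compl_row_zero:
  assumes "psd_on I A" "finite I" "s \<in> I" "j \<in> I"
  shows "schur_compl A s s j = 0" and "schur_compl A s j s = 0"
  using psd_on_zero_diag_row[OF assms] psd_on_sym[OF assms(1) assms(3,4)]
  by (cases "A s s = 0"; simp add: schur_compl_def)+

lemma quad_form_schur_compl:
  assumes "finite I" "s \<in> I" "\<And>j. j \<in> I \<Longrightarrow> A j s = A s j"
  shows "quad_form I (schur_compl A s) x
    = quad_form I A (\<lambda>i. x i + (if i = s then - (\<Sum>j\<in>I. A s j * x j) / A s s else 0))"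
proof -
  define L where "L = (\<Sum>j\<in>I. A s j * x j)"
  have "x i * schur_compl A s i j * x j = x i * A i j * x j - (x i * A s i) * (A s j * x j) / A s s"
    if "i \<in> I" for i j
    using assms(3)[OF that] by (simp add: schur_compl_def algebra_simps diff_divide_distrib)
  then have "quad_form I (schur_compl A s) x = quad_form I A x - L * L / A s s"
    unfolding quad_form_def L_def
    by (simp add: sum_subtractf sum_divide_distrib[symmetric] sum_product mult.commute)
  also have "\<dots> = quad_form I A x + 2 * (- L / A s s) * L + (- L / A s s)\<^sup>2 * A s s"
    by (cases "A s s = 0") (simp_all add: field_simps power2_eq_square)
  also have "\<dots> = quad_form I A (\<lambda>i. x i + (if i = s then - L / A s s else 0))"
    unfolding L_def by (rule quad_form_add_unit[of I s A, OF assms, symmetric])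
  finally show ?thesis unfolding L_def .
qed

lemma psd_on_schur_compl:
  assumes "psd_on I A" "finite I" "s \<in> I"
  shows "psd_on I (schur_compl A s)"
proof (rule psd_onI)
  show "schur_compl A s i j = schur_compl A s j i" if "i \<in> I" "j \<in> I" for i j
    using psd_on_sym[OF assms(1)] that assms(3) by (simp add: schur_compl_def mult.commute)
  show "0 \<le> quad_form I (schur_compl A s) x" for x
    using quad_form_schur_compl[OF assms(2,3)] psd_on_sym[OF assms(1) _ assms(3)]
      psd_on_quad_form_nonneg[OF assms(1)]
    by simp
qed

lemma psd_on_diag_scale:
  assumes "psd_on I A"
  shows "psd_on I (\<lambda>i j. d i * A i j * d j)"
proof (rule psd_onI)
  show "d i * A i j * d j = d j * A j i * d i" if "i \<in> I" "j \<in> I" for i j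
    using psd_on_sym[OF assms that] by simp
  show "0 \<le> quad_form I (\<lambda>i j. d i * A i j * d j) x" for x
    using psd_on_quad_form_nonneg[OF assms, of "\<lambda>i. d i * x i"] by (simp add: quad_form_def mult_ac)
qed

lemma quad_form_insert_zero_row:
  assumes "finite F" "s \<notin> F" "\<And>j. j \<in> insert s F \<Longrightarrow> M s j = 0 \<and> M j s = 0"
  shows "quad_form (insert s F) M x = quad_form F M x"
  using assms by (simp add: quad_form_def)

text \<open>Splitting off the rank-one part \<open>A\<^sub>i\<^sub>s A\<^sub>s\<^sub>j / A\<^sub>s\<^sub>s\<close> of \<open>A\<close> leaves
  \<open>schur_compl A s\<close>, whose row and column \<open>s\<close> vanish, so induction on the index set applies.\<close>

lemma psd_on_hadamard:
  assumes "finite I"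
  shows "psd_on I A \<Longrightarrow> psd_on I C \<Longrightarrow> psd_on I (\<lambda>i j. A i j * C i j)"
  using assms
proof (induction I arbitrary: A rule: finite_induct)
  case empty
  then show ?case by (simp add: psd_on_def quad_form_def)
next
  case (insert s F)
  let ?I = "insert s F"
  define B where "B = schur_compl A s"
  have fin: "finite ?I" using insert.hyps by simp
  have B: "psd_on ?I B" unfolding B_def using psd_on_schur_compl[OF insert.prems(1) fin] by simp
  have "0 \<le> quad_form ?I (\<lambda>i j. A i j * C i j) x" for x
  proof -
    have "x i * (A i j * C i j) * x j
        = x i * (B i j * C i j) * x j + (x i * A s i) * C i j * (x j * A s j) / A s s"
      if "i \<in> ?I" for i j
      using psd_on_sym[OF insert.prems(1) that, of s]
      by (simp add: B_def schur_compl_def algebra_simps add_divide_distrib)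
    then have "quad_form ?I (\<lambda>i j. A i j * C i j) x
        = quad_form ?I (\<lambda>i j. B i j * C i j) x + quad_form ?I C (\<lambda>i. x i * A s i) / A s s"
      unfolding quad_form_def by (simp add: sum.distrib sum_divide_distrib)
    also have "quad_form ?I (\<lambda>i j. B i j * C i j) x = quad_form F (\<lambda>i j. B i j * C i j) x"
      using schur_compl_row_zero[OF insert.prems(1) fin] insert.hyps
      by (intro quad_form_insert_zero_row) (auto simp: B_def)
    moreover have "psd_on F (\<lambda>i j. B i j * C i j)"
      using insert.IH psd_on_subset[OF B fin] psd_on_subset[OF insert.prems(2) fin] by blast
    moreover have "0 \<le> A s s" using psd_on_diag_nonneg[OF insert.prems(1) fin] by simp
    ultimately show ?thesis
      using psd_on_quad_form_nonneg[OF insert.prems(2)] by (simp add: psd_on_quad_form_nonneg)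
  qed
  moreover have "A i j * C i j = A j i * C j i" if "i \<in> ?I" "j \<in> ?I" for i j
    using psd_on_sym[OF insert.prems(1) that] psd_on_sym[OF insert.prems(2) that] by simp
  ultimately show ?case by (blast intro: psd_onI)
qed

section \<open>Triangle and Ptolemy inequalities for Gram matrices\<close>

text \<open>Heron's formula: \<open>heron (a\<^sup>2) (b\<^sup>2) (c\<^sup>2)\<close> is sixteen times the squared area of a triangle with
  sides \<open>a, b, c\<close>; for \<open>x, y, z \<ge> 0\<close>, \<open>heron x y z \<ge> 0\<close> iff \<open>\<surd>x, \<surd>y, \<surd>z\<close> satisfy the triangle
  inequality.\<close>

definition heron :: "real \<Rightarrow> real \<Rightarrow> real \<Rightarrow> real" where
  "heron x y z = 2 * (x * y + y * z + z * x) - x\<^sup>2 - y\<^sup>2 - z\<^sup>2"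

lemma heron_scale: "heron (c * x) (c * y) (c * z) = c\<^sup>2 * heron x y z"
  by (simp add: heron_def power2_eq_square algebra_simps)

text \<open>\<open>heron a b c\<close> is minus the discriminant of the quadratic \<open>b r\<^sup>2 + (a + b - c) r + a\<close>.\<close>

lemma quadratic_nonneg_of_heron:
  fixes a b c r :: real
  assumes "0 \<le> a" "0 \<le> b" "0 \<le> heron a b c"
  shows "r * c \<le> (r + 1) * a + r * (r + 1) * b"
proof (cases "b = 0")
  case True
  then have "(a - c)\<^sup>2 \<le> 0" using assms(3) by (simp add: heron_def power2_eq_square algebra_simps)
  then have "a = c" by simp
  then show ?thesis using True assms(1) by (simp add: algebra_simps)
next
  case False
  have "4 * b * ((r + 1) * a + r * (r + 1) * b - r * c) = (2 * b * r + a + b - c)\<^sup>2 + heron a b c"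
    by (simp add: heron_def power2_eq_square algebra_simps)
  also have "\<dots> \<ge> 0" using assms(3) by simp
  finally have "0 \<le> b * ((r + 1) * a + r * (r + 1) * b - r * c)" by simp
  then show ?thesis using assms(2) False by (simp add: zero_le_mult_iff)
qed

text \<open>If \<open>K\<close> is the Gram matrix of points \<open>x\<^sub>i\<close>, then \<open>sqdist K i j = |x\<^sub>i - x\<^sub>j|\<^sup>2\<close> and
  \<open>gram_at K l\<close> is the Gram matrix of the vectors \<open>x\<^sub>i - x\<^sub>l\<close>.\<close>

definition sqdist :: "(nat \<Rightarrow> nat \<Rightarrow> real) \<Rightarrow> nat \<Rightarrow> nat \<Rightarrow> real" where
  "sqdist K i j = K i i + K j j - 2 * K i j"

definition gram_at :: "(nat \<Rightarrow> nat \<Rightarrow> real) \<Rightarrow> nat \<Rightarrow> nat \<Rightarrow> nat \<Rightarrow> real" where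
  "gram_at K l i j = K i j - K i l - K l j + K l l"

lemma psd_on_gram_at:
  assumes "psd_on I K" "finite I" "l \<in> I"
  shows "psd_on I (gram_at K l)"
proof (rule psd_onI)
  have sym: "K i j = K j i" if "i \<in> I" "j \<in> I" for i j using psd_on_sym[OF assms(1) that] .
  show "gram_at K l i j = gram_at K l j i" if "i \<in> I" "j \<in> I" for i j
    using sym that assms(3) by (simp add: gram_at_def)
  show "0 \<le> quad_form I (gram_at K l) x" for x
  proof -
    define \<sigma> where "\<sigma> = (\<Sum>i\<in>I. x i)"
    define L where "L = (\<Sum>j\<in>I. K l j * x j)"
    have "x i * gram_at K l i j * x j
        = x i * K i j * x j - (K l i * x i) * x j - x i * (K l j * x j) + K l l * (x i * x j)"
      if "i \<in> I" for i j
      using sym[OF that assms(3)] by (simp add: gram_at_def algebra_simps)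
    then have "quad_form I (gram_at K l) x = quad_form I K x - L * \<sigma> - \<sigma> * L + K l l * (\<sigma> * \<sigma>)"
      unfolding quad_form_def \<sigma>_def L_def sum_product
      by (simp add: sum_subtractf sum.distrib sum_distrib_left)
    also have "\<dots> = quad_form I K x + 2 * (- \<sigma>) * L + (- \<sigma>)\<^sup>2 * K l l"
      by (simp add: power2_eq_square algebra_simps)
    also have "\<dots> = quad_form I K (\<lambda>i. x i + (if i = l then - \<sigma> else 0))"
      unfolding L_def using sym assms(2,3)
      by (intro quad_form_add_unit[of I l K, symmetric]) simp_all
    finally show ?thesis using psd_on_quad_form_nonneg[OF assms(1)] by simp
  qed
qed

lemma psd_on_sqdist_commute:
  assumes "psd_on I K" "i \<in> I" "j \<in> I"
  shows "sqdist K i j = sqdist K j i"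
  using psd_on_sym[OF assms] by (simp add: sqdist_def)

lemma gram_at_diag:
  assumes "psd_on I K" "i \<in> I" "l \<in> I"
  shows "gram_at K l i i = sqdist K i l"
  using psd_on_sym[OF assms] by (simp add: gram_at_def sqdist_def)

lemma sqdist_gram_at:
  assumes "psd_on I K" "i \<in> I" "j \<in> I" "l \<in> I"
  shows "sqdist (gram_at K l) i j = sqdist K i j"
  using psd_on_sym[OF assms(1)] assms(2-4) by (simp add: gram_at_def sqdist_def)

lemma psd_on_triangle:
  assumes "psd_on I K" "finite I" "i \<in> I" "j \<in> I" "k \<in> I"
  shows "0 \<le> heron (sqdist K j k) (sqdist K i k) (sqdist K i j)"
proof -
  define G where "G = gram_at K k"
  have G: "psd_on I G" unfolding G_def using psd_on_gram_at assms by blast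
  have "sqdist K i k = G i i" "sqdist K j k = G j j"
    using gram_at_diag[OF assms(1) _ assms(5)] assms(3,4) by (simp_all add: G_def)
  moreover have "sqdist K i j = G i i + G j j - 2 * G i j"
    using sqdist_gram_at[OF assms(1,3,4,5)] by (simp add: G_def sqdist_def)
  ultimately have "heron (sqdist K j k) (sqdist K i k) (sqdist K i j) = 4 * (G i i * G j j - (G i j)\<^sup>2)"
    unfolding heron_def by (simp only:) (simp add: power2_eq_square algebra_simps)
  then show ?thesis using psd_on_cauchy_schwarz[OF G assms(2-4)] by simp
qed

lemma sqdist_eq_of_sqdist_zero:
  assumes "psd_on I K" "finite I" "i \<in> I" "j \<in> I" "l \<in> I" and "sqdist K i l = 0"
  shows "sqdist K i j = sqdist K j l"
proof -
  define G where "G = gram_at K l"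
  have G: "psd_on I G" unfolding G_def using psd_on_gram_at assms by blast
  have "G i i = 0" using gram_at_diag[OF assms(1,3,5)] assms(6) by (simp add: G_def)
  then have "G i j = 0" using psd_on_zero_diag_row[OF G assms(2-4)] by simp
  then show ?thesis
    using sqdist_gram_at[OF assms(1,3,4,5)] gram_at_diag[OF assms(1,3,5)] gram_at_diag[OF assms(1,4,5)]
      assms(6)
    by (simp add: G_def sqdist_def)
qed

text \<open>The Gram matrix of the images \<open>(x\<^sub>i - x\<^sub>l) / |x\<^sub>i - x\<^sub>l|\<^sup>2\<close> under inversion in the unit sphere
  centred at \<open>x\<^sub>l\<close>.\<close>

definition inversion :: "(nat \<Rightarrow> nat \<Rightarrow> real) \<Rightarrow> nat \<Rightarrow> nat \<Rightarrow> nat \<Rightarrow> real" where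
  "inversion K l i j = gram_at K l i j / (sqdist K i l * sqdist K j l)"

lemma psd_on_inversion:
  assumes "psd_on I K" "finite I" "l \<in> I"
  shows "psd_on I (inversion K l)"
proof -
  have "inversion K l = (\<lambda>i j. inverse (sqdist K i l) * gram_at K l i j * inverse (sqdist K j l))"
    by (simp add: inversion_def fun_eq_iff divide_inverse inverse_mult_distrib mult_ac)
  then show ?thesis using psd_on_diag_scale[OF psd_on_gram_at[OF assms]] by simp
qed

lemma sqdist_inversion:
  assumes "psd_on I K" "i \<in> I" "j \<in> I" "l \<in> I" "sqdist K i l \<noteq> 0" "sqdist K j l \<noteq> 0"
  shows "sqdist K i j = sqdist K i l * sqdist K j l * sqdist (inversion K l) i j"
proof -
  have "sqdist (inversion K l) i j
      = 1 / sqdist K i l + 1 / sqdist K j l - 2 * gram_at K l i j / (sqdist K i l * sqdist K j l)"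
    using gram_at_diag[OF assms(1,2,4)] gram_at_diag[OF assms(1,3,4)] assms(5,6)
    by (simp add: sqdist_def[of "inversion K l"] inversion_def)
  moreover have "sqdist K i j = sqdist K i l + sqdist K j l - 2 * gram_at K l i j"
    using sqdist_gram_at[OF assms(1-4)] gram_at_diag[OF assms(1,2,4)] gram_at_diag[OF assms(1,3,4)]
    by (simp add: sqdist_def[of "gram_at K l"])
  ultimately show ?thesis using assms(5,6) by (simp only:) (simp add: field_simps)
qed

text \<open>After inversion centred at \<open>x\<^sub>l\<close>, Ptolemy's inequality is the triangle inequality for the
  images of \<open>x\<^sub>i, x\<^sub>j, x\<^sub>k\<close>; points coinciding with \<open>x\<^sub>l\<close> are treated separately.\<close>

lemma psd_on_ptolemy:
  assumes K: "psd_on I K" "finite I" and ijkl: "i \<in> I" "j \<in> I" "k \<in> I" "l \<in> I"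
  shows "0 \<le> heron (sqdist K i l * sqdist K j k) (sqdist K i k * sqdist K j l)
    (sqdist K i j * sqdist K k l)"
proof (cases "sqdist K i l = 0 \<or> sqdist K j l = 0 \<or> sqdist K k l = 0")
  case True
  note coincide = sqdist_eq_of_sqdist_zero[OF K] and commute = psd_on_sqdist_commute[OF K(1)]
  from True consider "sqdist K i l = 0" | "sqdist K j l = 0" | "sqdist K k l = 0" by blast
  then show ?thesis
  proof cases
    case 1
    then show ?thesis using coincide[of i j l] coincide[of i k l] ijkl commute
      by (simp add: heron_def power2_eq_square algebra_simps)
  next
    case 2
    then show ?thesis using coincide[of j i l] coincide[of j k l] ijkl commute
      by (simp add: heron_def power2_eq_square algebra_simps)
  next
    case 3
    then show ?thesis using coincide[of k i l] coincide[of k j l] ijkl commute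
      by (simp add: heron_def power2_eq_square algebra_simps)
  qed
next
  case False
  define K' where "K' = inversion K l"
  define \<mu> where "\<mu> = sqdist K i l * sqdist K j l * sqdist K k l"
  have inv: "sqdist K a b = sqdist K a l * sqdist K b l * sqdist K' a b"
    if "a \<in> {i, j, k}" "b \<in> {i, j, k}" for a b
    unfolding K'_def using sqdist_inversion[OF K(1)] that ijkl False by blast
  have "0 \<le> \<mu>\<^sup>2 * heron (sqdist K' j k) (sqdist K' i k) (sqdist K' i j)"
    using psd_on_triangle[OF psd_on_inversion[OF K ijkl(4)] K(2) ijkl(1-3)] by (simp add: K'_def)
  also have "\<dots> = heron (sqdist K i l * sqdist K j k) (sqdist K i k * sqdist K j l)
      (sqdist K i j * sqdist K k l)"
    unfolding heron_scale[symmetric] \<mu>_def using inv[of j k] inv[of i k] inv[of i j]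
    by (simp add: mult_ac)
  finally show ?thesis .
qed

section \<open>Principal minors\<close>

lemma pminor_cong:
  assumes "\<And>i j. i \<in> T \<Longrightarrow> j \<in> T \<Longrightarrow> M i j = N i j"
  shows "pminor M T = pminor N T"
  unfolding pminor_def
  by (intro sum.cong refl arg_cong2[where f="(*)"] prod.cong) (auto simp: assms permutes_in_image)

lemma pminor_singleton: "pminor A {i} = A i i"
  unfolding pminor_def by simp

lemma pminor_doubleton:
  assumes "i \<noteq> j"
  shows "pminor A {i, j} = A i i * A j j - A i j * A j i"
proof -
  have "pminor A {i, j} = (\<Sum>b\<in>{i, j}. \<Sum>q\<in>{p. p permutes {j}}.
      of_int (sign (transpose i b \<circ> q)) * (\<Prod>k\<in>{i, j}. A k ((transpose i b \<circ> q) k)))"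
    unfolding pminor_def using assms by (subst sum_over_permutations_insert) auto
  also have "\<dots> = A i i * A j j - A i j * A j i"
    using assms by (simp add: sign_swap_id)
  finally show ?thesis .
qed

lemma pminor_zero_row:
  assumes "finite T" "i \<in> T" "\<And>j. j \<in> T \<Longrightarrow> M i j = 0"
  shows "pminor M T = 0"
  unfolding pminor_def
proof (intro sum.neutral ballI)
  fix p assume "p \<in> {p. p permutes T}"
  then have "p i \<in> T" using assms(2) by (simp add: permutes_in_image)
  then have "(\<Prod>j\<in>T. M j (p j)) = 0"
    using assms by (intro prod_zero) auto
  then show "of_int (sign p) * (\<Prod>j\<in>T. M j (p j)) = 0" by simp
qed

text \<open>Composing with the transposition of two equal rows is a sign-reversing involution
  on the terms of the Leibniz sum.\<close>

lemma pminor_equal_rows: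
  assumes fin: "finite T" and "i \<in> T" "k \<in> T" "i \<noteq> k"
    and eq: "\<And>j. j \<in> T \<Longrightarrow> M i j = M k j"
  shows "pminor M T = 0"
proof -
  define P where "P = {p. p permutes T}"
  define \<tau> where "\<tau> = transpose i k"
  define f where "f p = of_int (sign p) * (\<Prod>j\<in>T. M j (p j))" for p
  have \<tau>: "\<tau> permutes T" unfolding \<tau>_def using assms(2,3) by (rule permutes_swap_id)
  have \<tau>\<tau>: "\<tau> (\<tau> j) = j" for j by (simp add: \<tau>_def)
  have bij: "bij_betw (\<lambda>p. p \<circ> \<tau>) P P"
    by (rule bij_betwI[where g="\<lambda>p. p \<circ> \<tau>"])
       (auto simp: P_def fun_eq_iff \<tau>\<tau> intro: permutes_compose[OF \<tau>])
  have "f (p \<circ> \<tau>) = - f p" if "p \<in> P" for p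
  proof -
    have p: "p permutes T" using that unfolding P_def by simp
    have "permutation p" "permutation \<tau>" using fin p \<tau> by (auto simp: permutation_permutes)
    then have "sign (p \<circ> \<tau>) = - sign p"
      using assms(4) by (simp add: sign_compose \<tau>_def sign_swap_id)
    moreover have "(\<Prod>j\<in>T. M j (p (\<tau> j))) = (\<Prod>j\<in>T. M (\<tau> j) (p j))"
      using prod.reindex_bij_betw[OF permutes_imp_bij[OF \<tau>], of "\<lambda>j. M (\<tau> j) (p j)"] by (simp add: \<tau>\<tau>)
    moreover have "(\<Prod>j\<in>T. M (\<tau> j) (p j)) = (\<Prod>j\<in>T. M j (p j))"
      using eq permutes_in_image[OF p] by (intro prod.cong) (auto simp: \<tau>_def transpose_def)
    ultimately show ?thesis by (simp add: f_def)
  qed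
  then have "sum f P = - sum f P"
    using sum.reindex_bij_betw[OF bij, of f] by (simp add: sum_negf)
  then show ?thesis unfolding pminor_def f_def P_def by simp
qed

lemma pminor_row_linear:
  assumes fin: "finite T" and i: "i \<in> T"
  shows "pminor (M(i := (\<lambda>j. M i j + c * R j))) T = pminor M T + c * pminor (M(i := R)) T"
proof -
  have "(\<Prod>j\<in>T. (M(i := (\<lambda>j. M i j + c * R j))) j (p j)) =
    (\<Prod>j\<in>T. M j (p j)) + c * (\<Prod>j\<in>T. (M(i := R)) j (p j))" for p
  proof -
    have "(\<Prod>j\<in>T - {i}. (M(i := N)) j (p j)) = (\<Prod>j\<in>T - {i}. M j (p j))" for N
      by (intro prod.cong) auto
    then show ?thesis
      by (simp add: prod.remove[OF fin i] algebra_simps)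
  qed
  then show ?thesis
    unfolding pminor_def by (simp add: algebra_simps sum.distrib sum_distrib_left)
qed

lemma pminor_add_row_multiple:
  assumes "finite T" "i \<in> T" "k \<in> T" "i \<noteq> k"
  shows "pminor (M(i := (\<lambda>j. M i j + c * M k j))) T = pminor M T"
  using pminor_row_linear[OF assms(1,2), of M c "M k"]
    pminor_equal_rows[OF assms, of "M(i := M k)"] assms(4)
  by simp

lemma pminor_add_multiples_of_row:
  assumes fin: "finite T" and s: "s \<in> T"
  shows "pminor (\<lambda>i j. if i = s then A i j else A i j + c i * A s j) T = pminor A T"
proof -
  define N where "N R = (\<lambda>i j. if i \<in> R then A i j + c i * A s j else A i j)" for R
  have "pminor (N R) T = pminor A T" if "finite R" "R \<subseteq> T - {s}" for R
    using that
  proof (induction R rule: finite_induct)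
    case empty
    then show ?case by (simp add: N_def)
  next
    case (insert r R)
    have "N (insert r R) = (N R)(r := (\<lambda>j. N R r j + c r * N R s j))"
      using insert.hyps insert.prems by (auto simp: N_def fun_eq_iff)
    then have "pminor (N (insert r R)) T = pminor (N R) T"
      using insert.prems by (simp only:) (rule pminor_add_row_multiple[OF fin _ s], auto)
    then show ?case using insert by simp
  qed
  moreover have "pminor (\<lambda>i j. if i = s then A i j else A i j + c i * A s j) T = pminor (N (T - {s})) T"
    by (rule pminor_cong) (simp add: N_def)
  ultimately show ?thesis using fin by simp
qed

lemma pminor_expand_zero_column:
  assumes fin: "finite T" and s: "s \<in> T" and z: "\<And>i. i \<in> T \<Longrightarrow> i \<noteq> s \<Longrightarrow> C i s = 0"
  shows "pminor C T = C s s * pminor C (T - {s})"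
proof -
  define f where "f p = of_int (sign p) * (\<Prod>j\<in>T. C j (p j))" for p
  have sub: "{p. p permutes (T - {s})} \<subseteq> {p. p permutes T}"
    by (auto intro: permutes_subset)
  have "f p = 0" if p: "p permutes T" and "\<not> p permutes (T - {s})" for p
  proof -
    have "p s \<noteq> s" using that permutes_superset[OF p, of "T - {s}"] by auto
    obtain i where i: "i \<in> T" "p i = s"
      using permutes_image[OF p] s by (metis imageE)
    with \<open>p s \<noteq> s\<close> have "i \<noteq> s" by auto
    then have "(\<Prod>j\<in>T. C j (p j)) = 0"
      using i z fin by (intro prod_zero) (auto intro!: bexI[of _ i])
    then show ?thesis unfolding f_def by simp
  qed
  then have "pminor C T = sum f {p. p permutes (T - {s})}"
    unfolding pminor_def f_def[symmetric]
    by (intro sum.mono_neutral_right[OF _ sub]) (auto simp: fin finite_permutations)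
  also have "\<dots> = (\<Sum>p | p permutes (T - {s}). C s s * (of_int (sign p) * (\<Prod>j\<in>T - {s}. C j (p j))))"
    by (intro sum.cong refl) (simp add: f_def prod.remove[OF fin s] permutes_not_in)
  finally show ?thesis
    unfolding pminor_def by (simp add: sum_distrib_left)
qed

lemma pminor_schur_compl:
  assumes "finite T" "s \<in> T" "A s s \<noteq> 0"
  shows "pminor A T = A s s * pminor (schur_compl A s) (T - {s})"
proof -
  define C where "C = (\<lambda>i j. if i = s then A i j else A i j + (- A i s / A s s) * A s j)"
  have "pminor A T = pminor C T"
    unfolding C_def by (rule pminor_add_multiples_of_row[OF assms(1,2), symmetric])
  also have "\<dots> = C s s * pminor C (T - {s})"
    by (rule pminor_expand_zero_column[OF assms(1,2)]) (use assms(3) in \<open>simp add: C_def\<close>)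
  also have "pminor C (T - {s}) = pminor (schur_compl A s) (T - {s})"
    by (rule pminor_cong) (auto simp: C_def schur_compl_def)
  finally show ?thesis by (simp add: C_def)
qed

lemma psd_on_pminor_schur_compl:
  assumes "psd_on I A" "finite I" "T \<subseteq> I" "s \<in> T"
  shows "pminor A T = A s s * pminor (schur_compl A s) (T - {s})"
proof -
  have T: "finite T" using assms(2,3) finite_subset by blast
  show ?thesis
  proof (cases "A s s = 0")
    case True
    then have "pminor A T = 0"
      using psd_on_zero_diag_row[OF assms(1,2)] assms(3,4) by (intro pminor_zero_row[OF T assms(4)]) auto
    then show ?thesis using True by simp
  next
    case False
    then show ?thesis using pminor_schur_compl[OF T assms(4)] by simp
  qed
qed

lemma psd_on_pminor_doubleton:
  assumes "psd_on I A" "i \<in> I" "j \<in> I" "i \<noteq> j"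
  shows "pminor A {i, j} = A i i * A j j - (A i j)\<^sup>2"
  using pminor_doubleton[OF assms(4)] psd_on_sym[OF assms(1) assms(3,2)] by (simp add: power2_eq_square)

text \<open>On a zero diagonal entry, \<open>x / 0 = 0\<close> makes the corresponding row vanish, as the row of \<open>A\<close>
  does; so the identity below needs no nondegeneracy assumption.\<close>

definition sq_correlation :: "(nat \<Rightarrow> nat \<Rightarrow> real) \<Rightarrow> nat \<Rightarrow> nat \<Rightarrow> real" where
  "sq_correlation A i j = (A i j)\<^sup>2 / (A i i * A j j)"

lemma psd_on_sq_correlation:
  assumes "psd_on I A" "finite I"
  shows "psd_on I (sq_correlation A)"
proof -
  have "sq_correlation A = (\<lambda>i j. inverse (A i i) * (A i j * A i j) * inverse (A j j))"
    by (simp add: sq_correlation_def fun_eq_iff divide_inverse power2_eq_square mult_ac)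
  then show ?thesis using psd_on_diag_scale[OF psd_on_hadamard[OF assms(2,1,1)]] by simp
qed

lemma sqdist_sq_correlation:
  assumes "psd_on I A" "finite I" "i \<in> I" "j \<in> I" "i \<noteq> j"
  shows "A i i * A j j * sqdist (sq_correlation A) i j = 2 * pminor A {i, j}"
proof (cases "A i i = 0 \<or> A j j = 0")
  case True
  then have "A i j = 0"
    using psd_on_zero_diag_row[OF assms(1,2)] psd_on_sym[OF assms(1)] assms(3,4) by metis
  then show ?thesis using True psd_on_pminor_doubleton[OF assms(1,3-5)] by auto
next
  case False
  then show ?thesis unfolding psd_on_pminor_doubleton[OF assms(1,3-5)]
    by (simp add: sqdist_def sq_correlation_def field_simps power2_eq_square)
qed

definition minor_form :: "(real \<times> nat set \<times> nat set) list \<Rightarrow> (nat \<Rightarrow> nat \<Rightarrow> real) \<Rightarrow> nat set \<Rightarrow> real" where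
  "minor_form cs A S = (\<Sum>(c, T, U) \<leftarrow> cs. c * pminor A (S \<union> T) * pminor A (S \<union> U))"

lemma minor_form_insert:
  assumes "psd_on I A" "finite I" "s \<in> I" "S \<subseteq> I" "s \<notin> S"
    and "\<forall>(c, T, U) \<in> set cs. T \<subseteq> I - {s} \<and> U \<subseteq> I - {s}"
  shows "minor_form cs A (insert s S) = (A s s)\<^sup>2 * minor_form cs (schur_compl A s) S"
proof -
  have "pminor A (insert s S \<union> T) = A s s * pminor (schur_compl A s) (S \<union> T)" if "T \<subseteq> I - {s}" for T
  proof -
    have "insert s S \<union> T - {s} = S \<union> T" using that assms(5) by auto
    then show ?thesis using psd_on_pminor_schur_compl[OF assms(1,2), of "insert s S \<union> T" s] that assms(3,4)
      by auto
  qed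
  then show ?thesis
    using assms(6) unfolding minor_form_def
    by (induction cs) (auto simp: algebra_simps power2_eq_square)
qed

lemma minor_form_nonneg:
  assumes base: "\<And>B. psd_on I B \<Longrightarrow> 0 \<le> minor_form cs B {}"
    and "finite I" "S \<subseteq> I" "\<forall>(c, T, U) \<in> set cs. T \<subseteq> I - S \<and> U \<subseteq> I - S"
  shows "psd_on I A \<Longrightarrow> 0 \<le> minor_form cs A S"
proof -
  have "finite S" using assms(2,3) finite_subset by blast
  then show "psd_on I A \<Longrightarrow> 0 \<le> minor_form cs A S"
    using assms(3,4)
  proof (induction S arbitrary: A rule: finite_induct)
    case empty
    then show ?case using base by simp
  next
    case (insert s S)
    then have "minor_form cs A (insert s S) = (A s s)\<^sup>2 * minor_form cs (schur_compl A s) S"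
      by (intro minor_form_insert[OF _ assms(2)]) auto
    moreover have "\<forall>(c, T, U) \<in> set cs. T \<subseteq> I - S \<and> U \<subseteq> I - S"
      using insert.prems(3) by fastforce
    then have "0 \<le> minor_form cs (schur_compl A s) S"
      using insert psd_on_schur_compl[OF insert.prems(1) assms(2)] by auto
    ultimately show ?case by simp
  qed
qed

definition ptolemy_terms :: "real \<Rightarrow> (real \<times> nat set \<times> nat set) list" where
  "ptolemy_terms r = [(r + 1, {1, 4}, {2, 3}), (r * (r + 1), {1, 3}, {2, 4}), (- r, {1, 2}, {3, 4})]"

definition triangle_terms :: "real \<Rightarrow> (real \<times> nat set \<times> nat set) list" where
  "triangle_terms r = [(r + 1, {1}, {2, 3}), (r * (r + 1), {2}, {1, 3}), (- r, {3}, {1, 2})]"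

lemma minor_form_ptolemy_terms:
  "minor_form (ptolemy_terms r) A S =
     (r + 1) * pminor A (S \<union> {1,4}) * pminor A (S \<union> {2,3})
     + r * (r + 1) * pminor A (S \<union> {1,3}) * pminor A (S \<union> {2,4})
     - r * pminor A (S \<union> {1,2}) * pminor A (S \<union> {3,4})"
  by (simp add: minor_form_def ptolemy_terms_def)

lemma minor_form_triangle_terms:
  "minor_form (triangle_terms r) A S =
     (r + 1) * pminor A (S \<union> {1}) * pminor A (S \<union> {2,3})
     + r * (r + 1) * pminor A (S \<union> {2}) * pminor A (S \<union> {1,3})
     - r * pminor A (S \<union> {3}) * pminor A (S \<union> {1,2})"
  by (simp add: minor_form_def triangle_terms_def)

lemma minor_form_ptolemy_terms_empty_nonneg:
  assumes A: "psd_on I A" "finite I" and sub: "{1, 2, 3, 4} \<subseteq> I"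
  shows "0 \<le> minor_form (ptolemy_terms r) A {}"
proof -
  define d where "d = sqdist (sq_correlation A)"
  define \<mu> where "\<mu> = A 1 1 * A 2 2 * A 3 3 * A 4 4 / 4"
  have minor: "pminor A {i, j} = A i i * A j j * d i j / 2"
    if "i \<in> {1, 2, 3, 4}" "j \<in> {1, 2, 3, 4}" "i \<noteq> j" for i j
    using sqdist_sq_correlation[OF A, of i j] that sub by (auto simp: d_def)
  have minor_nonneg: "0 \<le> pminor A {i, j}" if "i \<in> I" "j \<in> I" "i \<noteq> j" for i j
    using psd_on_pminor_doubleton[OF A(1) that] psd_on_cauchy_schwarz[OF A that(1,2)] by simp
  define a where "a = pminor A {1, 4} * pminor A {2, 3}"
  define b where "b = pminor A {1, 3} * pminor A {2, 4}"
  define c where "c = pminor A {1, 2} * pminor A {3, 4}"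
  have "0 \<le> \<mu>\<^sup>2 * heron (d 1 4 * d 2 3) (d 1 3 * d 2 4) (d 1 2 * d 3 4)"
    using psd_on_ptolemy[OF psd_on_sq_correlation[OF A] A(2), of 1 2 3 4] sub by (simp add: d_def)
  also have "\<dots> = heron a b c"
    unfolding heron_scale[symmetric] a_def b_def c_def \<mu>_def by (simp add: minor mult_ac)
  finally have "r * c \<le> (r + 1) * a + r * (r + 1) * b"
    using minor_nonneg sub by (intro quadratic_nonneg_of_heron) (auto simp: a_def b_def)
  then show ?thesis by (simp add: minor_form_ptolemy_terms a_def b_def c_def)
qed

lemma minor_form_triangle_terms_empty_nonneg:
  assumes A: "psd_on I A" "finite I" and sub: "{1, 2, 3} \<subseteq> I"
  shows "0 \<le> minor_form (triangle_terms r) A {}"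
proof -
  define d where "d = sqdist (sq_correlation A)"
  define \<mu> where "\<mu> = A 1 1 * A 2 2 * A 3 3 / 2"
  have minor: "pminor A {i, j} = A i i * A j j * d i j / 2"
    if "i \<in> {1, 2, 3}" "j \<in> {1, 2, 3}" "i \<noteq> j" for i j
    using sqdist_sq_correlation[OF A, of i j] that sub by (auto simp: d_def)
  have minor_nonneg: "0 \<le> A k k * pminor A {i, j}" if "i \<in> I" "j \<in> I" "k \<in> I" "i \<noteq> j" for i j k
    using psd_on_pminor_doubleton[OF A(1) that(1,2,4)] psd_on_cauchy_schwarz[OF A that(1,2)]
      psd_on_diag_nonneg[OF A that(3)] by simp
  define a where "a = A 1 1 * pminor A {2, 3}"
  define b where "b = A 2 2 * pminor A {1, 3}"
  define c where "c = A 3 3 * pminor A {1, 2}"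
  have "0 \<le> \<mu>\<^sup>2 * heron (d 2 3) (d 1 3) (d 1 2)"
    using psd_on_triangle[OF psd_on_sq_correlation[OF A] A(2), of 1 2 3] sub by (simp add: d_def)
  also have "\<dots> = heron a b c"
    unfolding heron_scale[symmetric] a_def b_def c_def \<mu>_def by (simp add: minor mult_ac)
  finally have "r * c \<le> (r + 1) * a + r * (r + 1) * b"
    using minor_nonneg sub by (intro quadratic_nonneg_of_heron) (auto simp: a_def b_def)
  then show ?thesis by (simp add: minor_form_triangle_terms pminor_singleton a_def b_def c_def)
qed

lemma ptolemy_minor_form_nonneg:
  assumes "psd_on I A" "finite I" "{1, 2, 3, 4} \<subseteq> I" "S \<subseteq> I - {1, 2, 3, 4}"
  shows "0 \<le> minor_form (ptolemy_terms r) A S"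
proof (rule minor_form_nonneg[OF _ assms(2) _ _ assms(1)])
  show "0 \<le> minor_form (ptolemy_terms r) B {}" if "psd_on I B" for B
    using minor_form_ptolemy_terms_empty_nonneg[OF that assms(2,3)] .
  show "S \<subseteq> I" using assms(4) by blast
  show "\<forall>(c, T, U) \<in> set (ptolemy_terms r). T \<subseteq> I - S \<and> U \<subseteq> I - S"
    using assms(3,4) by (auto simp: ptolemy_terms_def)
qed

lemma triangle_minor_form_nonneg:
  assumes "psd_on I A" "finite I" "{1, 2, 3} \<subseteq> I" "S \<subseteq> I - {1, 2, 3}"
  shows "0 \<le> minor_form (triangle_terms r) A S"
proof (rule minor_form_nonneg[OF _ assms(2) _ _ assms(1)])
  show "0 \<le> minor_form (triangle_terms r) B {}" if "psd_on I B" for B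
    using minor_form_triangle_terms_empty_nonneg[OF that assms(2,3)] .
  show "S \<subseteq> I" using assms(4) by blast
  show "\<forall>(c, T, U) \<in> set (triangle_terms r). T \<subseteq> I - S \<and> U \<subseteq> I - S"
    using assms(3,4) by (auto simp: triangle_terms_def)
qed

lemma minor_form_zero_matrix:
  assumes "finite S" "\<forall>(c, T, U) \<in> set cs. finite T \<and> T \<noteq> {}"
  shows "minor_form cs (\<lambda>i j. 0) S = 0"
  using assms(2)
proof (induction cs)
  case Nil
  then show ?case by (simp add: minor_form_def)
next
  case (Cons x cs)
  obtain c T U where x: "x = (c, T, U)" by (cases x)
  then obtain t where "t \<in> T" "finite T" using Cons.prems by auto
  then have "pminor (\<lambda>i j. 0) (S \<union> T) = 0"
    using assms(1) by (intro pminor_zero_row[of _ t]) auto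
  then show ?case using Cons x by (simp add: minor_form_def)
qed

lemma INF_minor_form_eq_0:
  assumes "finite S" "\<forall>(c, T, U) \<in> set cs. finite T \<and> T \<noteq> {}"
    and nonneg: "\<And>A. sym_psd n A \<Longrightarrow> 0 \<le> minor_form cs A S"
  shows "(INF A\<in>{A. sym_psd n A}. minor_form cs A S) = 0"
proof (rule cInf_eq_minimum)
  have "sym_psd n (\<lambda>i j. 0)" by (simp add: sym_psd_def)
  then show "0 \<in> (\<lambda>A. minor_form cs A S) ` {A. sym_psd n A}"
    using minor_form_zero_matrix[OF assms(1,2)] by (intro image_eqI[where x="\<lambda>i j. 0"]) auto
qed (use nonneg in auto)

lemma ptolemy_minor_form_INF:
  assumes "4 \<le> n" "S \<subseteq> {1..n} - {1, 2, 3, 4}"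
  shows "(INF A\<in>{A. sym_psd n A}. minor_form (ptolemy_terms r) A S) = 0"
proof (rule INF_minor_form_eq_0)
  show "finite S" using assms(2) finite_subset by blast
  show "\<forall>(c, T, U) \<in> set (ptolemy_terms r). finite T \<and> T \<noteq> {}" by (simp add: ptolemy_terms_def)
  show "0 \<le> minor_form (ptolemy_terms r) A S" if "sym_psd n A" for A
    using that assms by (intro ptolemy_minor_form_nonneg) (auto simp: sym_psd_eq_psd_on)
qed

lemma triangle_minor_form_INF:
  assumes "3 \<le> n" "S \<subseteq> {1..n} - {1, 2, 3}"
  shows "(INF A\<in>{A. sym_psd n A}. minor_form (triangle_terms r) A S) = 0"
proof (rule INF_minor_form_eq_0)
  show "finite S" using assms(2) finite_subset by blast
  show "\<forall>(c, T, U) \<in> set (triangle_terms r). finite T \<and> T \<noteq> {}" by (simp add: triangle_terms_def)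
  show "0 \<le> minor_form (triangle_terms r) A S" if "sym_psd n A" for A
    using that assms by (intro triangle_minor_form_nonneg) (auto simp: sym_psd_eq_psd_on)
qed

theorem corollary5p3:
  shows
   "(\<forall>n A S (r::real). 4 \<le> n \<and> sym_psd n A \<and> S \<subseteq> {1..n} - {1,2,3,4} \<longrightarrow>
        (r + 1) * pminor A (S \<union> {1,4}) * pminor A (S \<union> {2,3})
        + r * (r + 1) * pminor A (S \<union> {1,3}) * pminor A (S \<union> {2,4})
        \<ge> r * pminor A (S \<union> {1,2}) * pminor A (S \<union> {3,4}))
  \<and> (\<forall>n A S (r::real). 3 \<le> n \<and> sym_psd n A \<and> S \<subseteq> {1..n} - {1,2,3} \<longrightarrow>
        (r + 1) * pminor A (S \<union> {1}) * pminor A (S \<union> {2,3})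
        + r * (r + 1) * pminor A (S \<union> {2}) * pminor A (S \<union> {1,3})
        \<ge> r * pminor A (S \<union> {3}) * pminor A (S \<union> {1,2}))
  \<and> (\<forall>n S (r::real). 4 \<le> n \<and> S \<subseteq> {1..n} - {1,2,3,4} \<longrightarrow>
        (INF A\<in>{A. sym_psd n A}.
           (r + 1) * pminor A (S \<union> {1,4}) * pminor A (S \<union> {2,3})
           + r * (r + 1) * pminor A (S \<union> {1,3}) * pminor A (S \<union> {2,4})
           - r * pminor A (S \<union> {1,2}) * pminor A (S \<union> {3,4})) = 0)
  \<and> (\<forall>n S (r::real). 3 \<le> n \<and> S \<subseteq> {1..n} - {1,2,3} \<longrightarrow>
        (INF A\<in>{A. sym_psd n A}.
           (r + 1) * pminor A (S \<union> {1}) * pminor A (S \<union> {2,3})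
           + r * (r + 1) * pminor A (S \<union> {2}) * pminor A (S \<union> {1,3})
           - r * pminor A (S \<union> {3}) * pminor A (S \<union> {1,2})) = 0)"
  apply (intro conjI allI impI)
  subgoal for n A S r
    using ptolemy_minor_form_nonneg[of "{1..n}" A S r] by (simp add: sym_psd_eq_psd_on minor_form_ptolemy_terms)
  subgoal for n A S r
    using triangle_minor_form_nonneg[of "{1..n}" A S r] by (simp add: sym_psd_eq_psd_on minor_form_triangle_terms)
  subgoal for n S r using ptolemy_minor_form_INF[of n S r] by (simp add: minor_form_ptolemy_terms)
  subgoal for n S r using triangle_minor_form_INF[of n S r] by (simp add: minor_form_triangle_terms)
  done

end
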